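(* Let $p$ be an odd prime, $e\ge1$, and let $\mathcal M$ be an orientably-regular embedding of $K_{p[p^e]}$ with $G=\mathrm{Aut}^+(\mathcal M)$ and $H\trianglelefteq G$ the subgroup of automorphisms preserving each of the $p$ parts setwise. Suppose $H=\langle x,z\rangle$ has presentation $\langle x,z\mid x^{p^e}=z^{p^e}=1,\ z^x=z^q\rangle$ with $q=1+p^f$ for some $f\in\{1,\dots,e\}$. Then $N:=\langle x^{p^{e-f}},z\rangle$ is a normal subgroup of $G$.
   Context: $K_{m[n]}$ is the complete multipartite graph with $m$ parts of $n$ vertices each; an orientably-regular embedding of it is an orientable map with this underlying graph whose group $\mathrm{Aut}^+(\mathcal M)$ of orientation-preserving automorphisms acts regularly on arcs. Conjugation is $z^x=x^{-1}zx$. *)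

theory Defs
  imports "HOL-Algebra.Algebra"
begin

text \<open>Algebraic model of an orientably-regular map M(G;R,L): the arcs are the elements
of G = Aut+(M) = <R,L> (L an involution), G acting by left multiplication (regularly);
the vertex at which arc g starts is the left coset g<R>, and the reverse of arc g is gL.\<close>

definition orreg_map :: "('g, 'b) monoid_scheme \<Rightarrow> 'g \<Rightarrow> 'g \<Rightarrow> bool" where
  "orreg_map G R L \<longleftrightarrow> group G \<and> finite (carrier G) \<and> R \<in> carrier G \<and> L \<in> carrier G
     \<and> L \<noteq> \<one>\<^bsub>G\<^esub> \<and> L \<otimes>\<^bsub>G\<^esub> L = \<one>\<^bsub>G\<^esub>
     \<and> generate G {R, L} = carrier G"

definition map_vertices :: "('g, 'b) monoid_scheme \<Rightarrow> 'g \<Rightarrow> 'g set set" where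
  "map_vertices G R = {g <#\<^bsub>G\<^esub> generate G {R} | g. g \<in> carrier G}"

definition arc_mult :: "('g, 'b) monoid_scheme \<Rightarrow> 'g \<Rightarrow> 'g set \<Rightarrow> 'g set \<Rightarrow> nat" where
  "arc_mult G L A B = card {g \<in> A. g \<otimes>\<^bsub>G\<^esub> L \<in> B}"

text \<open>The underlying graph is K_{m[n]}: phi labels the vertices bijectively by
(part, index) in {0..<m} x {0..<n}; distinct vertices in different parts are joined
by exactly one edge, vertices in the same part (and loops) by none.\<close>
definition complete_multipartite_labelling ::
  "('g, 'b) monoid_scheme \<Rightarrow> 'g \<Rightarrow> 'g \<Rightarrow> nat \<Rightarrow> nat \<Rightarrow> ('g set \<Rightarrow> nat \<times> nat) \<Rightarrow> bool" where
  "complete_multipartite_labelling G R L m n phi \<longleftrightarrow>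
     bij_betw phi (map_vertices G R) ({0..<m} \<times> {0..<n}) \<and>
     (\<forall>A \<in> map_vertices G R. \<forall>B \<in> map_vertices G R.
        arc_mult G L A B = (if fst (phi A) \<noteq> fst (phi B) then 1 else 0))"

definition part_stabiliser ::
  "('g, 'b) monoid_scheme \<Rightarrow> 'g \<Rightarrow> ('g set \<Rightarrow> nat \<times> nat) \<Rightarrow> 'g set" where
  "part_stabiliser G R phi = {h \<in> carrier G. \<forall>A \<in> map_vertices G R.
       fst (phi (h <#\<^bsub>G\<^esub> A)) = fst (phi A)}"

end

theory Submission
  imports Defs
begin

text \<open>Conjugation by any g preserves the parts, so it maps H to itself, sending x, z to
elements y, w of H with w^y = w^q. Every element of H is uniquely x^a z^b with
0 \<le> a, b < p^e, and the commutator subgroup of H lies in \<langle>z\<rangle>. Hence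
w^(p^f) = [w, y] \<in> \<langle>z\<rangle>, while its x-exponent is a p^f; uniqueness forces
p^e | a p^f, i.e. p^(e-f) | a, so w \<in> N. Likewise g x^(p^(e-f)) g^-1 = y^(p^(e-f)) has
x-exponent divisible by p^(e-f) and lies in N.\<close>

context group begin

lemma m_inv_cancel_left [simp]: "a \<in> carrier G \<Longrightarrow> c \<in> carrier G \<Longrightarrow> a \<otimes> (inv a \<otimes> c) = c"
  by (simp add: m_assoc[symmetric])

lemma inv_m_cancel_left [simp]: "a \<in> carrier G \<Longrightarrow> c \<in> carrier G \<Longrightarrow> inv a \<otimes> (a \<otimes> c) = c"
  by (simp add: m_assoc[symmetric])

lemma l_coset_eq_image: "g <# M = (\<lambda>c. g \<otimes> c) ` M"
  unfolding l_coset_def by auto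

lemma arc_mult_l_coset:
  assumes C: "C \<subseteq> carrier G" and D: "D \<subseteq> carrier G" and g: "g \<in> carrier G"
    and L: "L \<in> carrier G"
  shows "arc_mult G L (g <# C) (g <# D) = arc_mult G L C D"
proof -
  have "{k \<in> g <# C. k \<otimes> L \<in> g <# D} = (\<lambda>c. g \<otimes> c) ` {c \<in> C. c \<otimes> L \<in> D}"
  proof (intro equalityI subsetI)
    fix k assume k: "k \<in> {k \<in> g <# C. k \<otimes> L \<in> g <# D}"
    then obtain c where c: "c \<in> C" "k = g \<otimes> c" by (auto simp: l_coset_eq_image)
    from k obtain d where d: "d \<in> D" "k \<otimes> L = g \<otimes> d" by (auto simp: l_coset_eq_image)
    have "g \<otimes> (c \<otimes> L) = g \<otimes> d" using c d C D g L by (simp add: m_assoc subsetD)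
    then have "c \<otimes> L = d" using c d C D g L by (metis l_cancel m_closed subsetD)
    then show "k \<in> (\<lambda>c. g \<otimes> c) ` {c \<in> C. c \<otimes> L \<in> D}" using c d by auto
  next
    fix k assume "k \<in> (\<lambda>c. g \<otimes> c) ` {c \<in> C. c \<otimes> L \<in> D}"
    then show "k \<in> {k \<in> g <# C. k \<otimes> L \<in> g <# D}"
      using C D g L by (auto simp: l_coset_eq_image m_assoc subsetD)
  qed
  moreover have "inj_on (\<lambda>c. g \<otimes> c) {c \<in> C. c \<otimes> L \<in> D}"
    using C g by (auto simp: inj_on_def subsetD)
  ultimately show ?thesis unfolding arc_mult_def by (simp add: card_image)
qed

lemma map_vertex_subset_carrier:
  "A \<in> map_vertices G R \<Longrightarrow> R \<in> carrier G \<Longrightarrow> A \<subseteq> carrier G"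
  unfolding map_vertices_def using generate_incl[of "{R}"] by (auto simp: l_coset_eq_image)

lemma l_coset_map_vertex:
  "A \<in> map_vertices G R \<Longrightarrow> R \<in> carrier G \<Longrightarrow> g \<in> carrier G \<Longrightarrow> g <# A \<in> map_vertices G R"
  unfolding map_vertices_def using generate_incl[of "{R}"] lcos_m_assoc by auto

text \<open>Two vertices lie in the same part iff no arc joins them, and left multiplication
preserves arc multiplicities; so conjugates of part-preserving elements preserve parts.\<close>

lemma part_stabiliser_conj_closed:
  assumes R: "R \<in> carrier G" and L: "L \<in> carrier G"
    and lab: "complete_multipartite_labelling G R L m n phi"
    and h: "h \<in> part_stabiliser G R phi" and g: "g \<in> carrier G"
  shows "g \<otimes> h \<otimes> inv g \<in> part_stabiliser G R phi"
proof -
  let ?V = "map_vertices G R"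
  have same_part: "fst (phi C) = fst (phi D) \<longleftrightarrow> arc_mult G L C D = 0"
    if "C \<in> ?V" "D \<in> ?V" for C D
    using lab that unfolding complete_multipartite_labelling_def by auto
  have hc: "h \<in> carrier G" using h unfolding part_stabiliser_def by auto
  have "fst (phi ((g \<otimes> h \<otimes> inv g) <# A)) = fst (phi A)" if A: "A \<in> ?V" for A
  proof -
    define B where "B = inv g <# A"
    have B: "B \<in> ?V" and hB: "h <# B \<in> ?V"
      using l_coset_map_vertex A R g hc B_def by simp_all
    have A_eq: "A = g <# B" and hA_eq: "(g \<otimes> h \<otimes> inv g) <# A = g <# (h <# B)"
      unfolding B_def using map_vertex_subset_carrier[OF A R] g hc
      by (simp_all add: lcos_m_assoc lcos_mult_one m_assoc)
    have "fst (phi (h <# B)) = fst (phi B)" using h B unfolding part_stabiliser_def by auto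
    then have "arc_mult G L (h <# B) B = 0" using same_part hB B by blast
    then have "arc_mult G L (g <# (h <# B)) (g <# B) = 0"
      using arc_mult_l_coset map_vertex_subset_carrier hB B R g L by simp
    then show ?thesis using same_part l_coset_map_vertex hB B R g A_eq hA_eq by metis
  qed
  then show ?thesis unfolding part_stabiliser_def using g hc by auto
qed

lemma normal_generate_of_conj_mem:
  assumes S: "S \<subseteq> carrier G"
    and conj: "\<And>g h. g \<in> carrier G \<Longrightarrow> h \<in> S \<Longrightarrow> g \<otimes> h \<otimes> inv g \<in> generate G S"
  shows "generate G S \<lhd> G"
proof (rule normal_invI[OF generate_is_subgroup[OF S]])
  fix g h assume g: "g \<in> carrier G" and h: "h \<in> generate G S"
  from h show "g \<otimes> h \<otimes> inv g \<in> generate G S"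
  proof (induction h rule: generate.induct)
    case one
    then show ?case using g generate.one by simp
  next
    case (incl h)
    then show ?case using conj g by blast
  next
    case (inv h)
    then have "g \<otimes> inv h \<otimes> inv g = inv (g \<otimes> h \<otimes> inv g)"
      using g S by (auto simp: inv_mult_group m_assoc)
    then show ?case using generate_m_inv_closed[OF S] conj g inv by simp
  next
    case (eng h1 h2)
    then have "h1 \<in> carrier G" "h2 \<in> carrier G" using generate_in_carrier[OF S] by auto
    then have "g \<otimes> (h1 \<otimes> h2) \<otimes> inv g = (g \<otimes> h1 \<otimes> inv g) \<otimes> (g \<otimes> h2 \<otimes> inv g)"
      using g by (simp add: m_assoc)
    then show ?case using generate.eng[OF eng.IH] by simp
  qed
qed

lemma conj_nat_pow:
  assumes "a \<in> carrier G" "b \<in> carrier G"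
  shows "inv a \<otimes> b [^] (j::nat) \<otimes> a = (inv a \<otimes> b \<otimes> a) [^] j"
proof (induction j)
  case 0 then show ?case using assms by simp
next
  case (Suc j)
  have "inv a \<otimes> b [^] Suc j \<otimes> a = (inv a \<otimes> b [^] j \<otimes> a) \<otimes> (inv a \<otimes> b \<otimes> a)"
    using assms by (simp add: m_assoc)
  then show ?case using Suc by simp
qed

lemma nat_pow_mod:
  assumes "x \<in> carrier G" and "x [^] (n::nat) = \<one>"
  shows "x [^] (i::nat) = x [^] (i mod n)"
proof -
  have "x [^] i = x [^] (n * (i div n)) \<otimes> x [^] (i mod n)" using assms by (simp add: nat_pow_mult)
  also have "\<dots> = x [^] (i mod n)" using assms by (simp add: nat_pow_pow[symmetric])
  finally show ?thesis .
qed

lemma inv_nat_pow_eq: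
  assumes w: "w \<in> carrier G" and wn: "w [^] (n::nat) = \<one>" and n: "0 < n"
  shows "inv (w [^] (m::nat)) = w [^] (m * (n - 1))"
proof -
  have "w [^] m \<otimes> w [^] (m * (n - 1)) = w [^] (n * m)"
    using w n by (simp add: nat_pow_mult algebra_simps)
  also have "\<dots> = \<one>" using w wn by (simp add: nat_pow_pow[symmetric])
  finally show ?thesis using w by (metis inv_equality nat_pow_closed inv_comm)
qed

end

text \<open>Generators x, z of a metacyclic group of order n^2 with z^x = z^q and
x^n = z^n = 1: the words x^i z^j with i, j < n are then pairwise distinct.\<close>

locale metacyclic_pair = group +
  fixes x z :: 'a and q n :: nat
  assumes x_closed [simp]: "x \<in> carrier G" and z_closed [simp]: "z \<in> carrier G"
    and conj_z: "inv x \<otimes> z \<otimes> x = z [^] q"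
    and x_pow_n: "x [^] n = \<one>" and z_pow_n: "z [^] n = \<one>" and n_pos: "0 < n"
    and card_generate: "card (generate G {x, z}) = n * n"
begin

lemma conj_z_pow_by_x_pow: "inv (x [^] (l::nat)) \<otimes> z [^] (j::nat) \<otimes> x [^] l = z [^] (j * q ^ l)"
proof (induction l arbitrary: j)
  case 0 then show ?case by simp
next
  case (Suc l)
  have "inv (x [^] Suc l) \<otimes> z [^] j \<otimes> x [^] Suc l
      = inv x \<otimes> (inv (x [^] l) \<otimes> z [^] j \<otimes> x [^] l) \<otimes> x"
    by (simp add: inv_mult_group m_assoc)
  also have "\<dots> = (z [^] q) [^] (j * q ^ l)" using Suc conj_nat_pow conj_z by simp
  also have "\<dots> = z [^] (j * q ^ Suc l)" by (simp add: nat_pow_pow algebra_simps)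
  finally show ?case .
qed

lemma z_pow_mult_x_pow: "z [^] (j::nat) \<otimes> x [^] (l::nat) = x [^] l \<otimes> z [^] (j * q ^ l)"
proof -
  have "x [^] l \<otimes> z [^] (j * q ^ l) = x [^] l \<otimes> (inv (x [^] l) \<otimes> z [^] j \<otimes> x [^] l)"
    by (simp add: conj_z_pow_by_x_pow)
  then show ?thesis by (simp add: m_assoc)
qed

lemma normal_form_mult:
  "(x [^] (i::nat) \<otimes> z [^] (j::nat)) \<otimes> (x [^] (l::nat) \<otimes> z [^] (k::nat)) = x [^] (i + l) \<otimes> z [^] (j * q ^ l + k)"
proof -
  have "(x [^] (i::nat) \<otimes> z [^] (j::nat)) \<otimes> (x [^] (l::nat) \<otimes> z [^] (k::nat)) = x [^] i \<otimes> (z [^] j \<otimes> x [^] l) \<otimes> z [^] k"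
    by (simp add: m_assoc)
  also have "\<dots> = x [^] (i + l) \<otimes> z [^] (j * q ^ l + k)"
    by (simp add: z_pow_mult_x_pow m_assoc nat_pow_mult[symmetric])
  finally show ?thesis .
qed

lemma normal_form_inv:
  "inv (x [^] (i::nat) \<otimes> z [^] (j::nat)) = x [^] (i * (n - 1)) \<otimes> z [^] (j * (n - 1) * q ^ (i * (n - 1)))"
  using inv_nat_pow_eq[OF x_closed x_pow_n n_pos] inv_nat_pow_eq[OF z_closed z_pow_n n_pos]
  by (simp add: inv_mult_group z_pow_mult_x_pow)

lemma normal_form_pow: "\<exists>j'::nat. (x [^] (i::nat) \<otimes> z [^] (j::nat)) [^] (m::nat) = x [^] (i * m) \<otimes> z [^] j'"
proof (induction m)
  case 0 show ?case by (intro exI[of _ 0]) simp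
next
  case (Suc m)
  then obtain j' :: nat where "(x [^] i \<otimes> z [^] j) [^] m = x [^] (i * m) \<otimes> z [^] j'" by blast
  then have "(x [^] i \<otimes> z [^] j) [^] Suc m = x [^] (i * m + i) \<otimes> z [^] (j' * q ^ i + j)"
    by (simp add: normal_form_mult)
  then show ?case by (intro exI[of _ "j' * q ^ i + j"]) (simp add: algebra_simps)
qed

lemma generate_subset_normal_forms:
  "generate G {x, z} \<subseteq> (\<lambda>(i::nat, j::nat). x [^] i \<otimes> z [^] j) ` ({..<n} \<times> {..<n})"
proof -
  let ?S = "{x [^] (i::nat) \<otimes> z [^] (j::nat) | i j. True}"
  have "subgroup ?S G"
  proof (rule subgroupI)
    show "inv a \<in> ?S" if "a \<in> ?S" for a using that normal_form_inv by blast
    show "a \<otimes> b \<in> ?S" if "a \<in> ?S" "b \<in> ?S" for a b using that normal_form_mult by blast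
  qed auto
  moreover have "x = x [^] (1::nat) \<otimes> z [^] (0::nat)" "z = x [^] (0::nat) \<otimes> z [^] (1::nat)"
    by simp_all
  then have "{x, z} \<subseteq> ?S" by blast
  ultimately have "generate G {x, z} \<subseteq> ?S" by (metis generate_subgroup_incl)
  moreover have "x [^] i \<otimes> z [^] j = x [^] (i mod n) \<otimes> z [^] (j mod n)" for i j :: nat
    using nat_pow_mod[OF x_closed x_pow_n] nat_pow_mod[OF z_closed z_pow_n] by metis
  then have "?S \<subseteq> (\<lambda>(i::nat, j::nat). x [^] i \<otimes> z [^] j) ` ({..<n} \<times> {..<n})"
    using n_pos by force
  ultimately show ?thesis by blast
qed

lemma normal_form_exists:
  assumes "h \<in> generate G {x, z}" obtains i j :: nat where "h = x [^] i \<otimes> z [^] j"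
  using assms generate_subset_normal_forms by fastforce

lemma inj_on_normal_forms: "inj_on (\<lambda>(i::nat, j::nat). x [^] i \<otimes> z [^] j) ({..<n} \<times> {..<n})"
proof -
  let ?f = "\<lambda>(i::nat, j::nat). x [^] i \<otimes> z [^] j" and ?B = "{..<n} \<times> {..<n}"
  have "n * n \<le> card (?f ` ?B)"
    using card_mono[OF _ generate_subset_normal_forms] card_generate by simp
  moreover have "card (?f ` ?B) \<le> card ?B" by (rule card_image_le) simp
  ultimately have "card (?f ` ?B) = card ?B" by simp
  then show ?thesis by (rule eq_card_imp_inj_on[rotated]) simp
qed

lemma dvd_of_x_pow_eq_z_pow:
  assumes "x [^] (s::nat) = z [^] (t::nat)" shows "n dvd s"
proof -
  let ?f = "\<lambda>(i::nat, j::nat). x [^] i \<otimes> z [^] j"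
  have "?f (s mod n, 0) = ?f (0, t mod n)"
    using assms nat_pow_mod[OF x_closed x_pow_n, of s] nat_pow_mod[OF z_closed z_pow_n, of t] by simp
  moreover have "(s mod n, 0) \<in> {..<n} \<times> {..<n}" "(0, t mod n) \<in> {..<n} \<times> {..<n}"
    using n_pos by auto
  ultimately have "(s mod n, 0) = (0, t mod n)" using inj_on_normal_forms by (meson inj_onD)
  then show ?thesis by auto
qed

lemma commutator_eq_z_pow:
  assumes "h \<in> generate G {x, z}" and "k \<in> generate G {x, z}"
  obtains J :: nat where "inv h \<otimes> inv k \<otimes> h \<otimes> k = z [^] J"
proof -
  obtain a b :: nat where h: "h = x [^] a \<otimes> z [^] b" using assms(1) by (rule normal_form_exists)
  obtain c d :: nat where k: "k = x [^] c \<otimes> z [^] d" using assms(2) by (rule normal_form_exists)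
  have "a * (n - 1) + c * (n - 1) + a + c = n * (a + c)"
    using n_pos by (cases n) (auto simp: algebra_simps)
  then obtain J :: nat where "inv h \<otimes> inv k \<otimes> h \<otimes> k = x [^] (n * (a + c)) \<otimes> z [^] J"
    unfolding h k normal_form_inv normal_form_mult by (metis add.assoc)
  moreover have "x [^] (n * (a + c)) = \<one>" by (simp add: nat_pow_pow[symmetric] x_pow_n)
  ultimately show ?thesis using that by simp
qed

text \<open>If y^-1 w y = w^(1+r), then w^r is a commutator, hence a power of z, while its
x-exponent is a r.\<close>

lemma x_exponent_dvd_of_conj_eq_pow:
  assumes w: "w \<in> generate G {x, z}" and y: "y \<in> generate G {x, z}"
    and conj: "inv y \<otimes> w \<otimes> y = w [^] (1 + (r::nat))"
  obtains a b :: nat where "w = x [^] a \<otimes> z [^] b" and "n dvd a * r"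
proof -
  obtain a b :: nat where wab: "w = x [^] a \<otimes> z [^] b" using w by (rule normal_form_exists)
  have wc: "w \<in> carrier G" "y \<in> carrier G"
    using w y generate_incl[of "{x, z}"] by auto
  have "w [^] (1 + r) = w \<otimes> w [^] r" using wc nat_pow_mult[of w 1 r] by simp
  then have "w [^] r = inv w \<otimes> (inv y \<otimes> w \<otimes> y)" using conj wc by (simp add: m_assoc)
  then have "w [^] r = inv w \<otimes> inv y \<otimes> w \<otimes> y" using wc by (simp add: m_assoc)
  moreover obtain J :: nat where "inv w \<otimes> inv y \<otimes> w \<otimes> y = z [^] J"
    using w y by (rule commutator_eq_z_pow)
  moreover obtain j :: nat where j: "w [^] r = x [^] (a * r) \<otimes> z [^] j"
    using wab normal_form_pow by blast
  ultimately have "x [^] (a * r) = z [^] J \<otimes> inv (z [^] j)" by (simp add: inv_solve_right)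
  also have "\<dots> = z [^] (J + j * (n - 1))"
    using inv_nat_pow_eq[OF z_closed z_pow_n n_pos] by (simp add: nat_pow_mult)
  finally have "n dvd a * r" by (rule dvd_of_x_pow_eq_z_pow)
  then show ?thesis using wab that by blast
qed

lemma normal_form_mem_generate: "x [^] ((k::nat) * t) \<otimes> z [^] (b::nat) \<in> generate G {x [^] k, z}"
proof -
  have sub: "subgroup (generate G {x [^] k, z}) G" by (simp add: generate_is_subgroup)
  have "x [^] k \<in> generate G {x [^] k, z}" "z \<in> generate G {x [^] k, z}"
    by (auto intro: generate.incl)
  then have "(x [^] k) [^] int t \<in> generate G {x [^] k, z}" "z [^] int b \<in> generate G {x [^] k, z}"
    using subgroup_int_pow_closed[OF sub] by blast+
  then show ?thesis
    using subgroup.m_closed[OF sub] by (simp add: int_pow_int nat_pow_pow)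
qed

lemma pow_mem_generate_x_pow:
  assumes "y \<in> generate G {x, z}" shows "y [^] (k::nat) \<in> generate G {x [^] k, z}"
proof -
  obtain c d :: nat where "y = x [^] c \<otimes> z [^] d" using assms by (rule normal_form_exists)
  then obtain j :: nat where "y [^] k = x [^] (k * c) \<otimes> z [^] j"
    using normal_form_pow by (metis mult.commute)
  then show ?thesis by (simp add: normal_form_mem_generate)
qed

lemma mem_generate_x_pow_of_conj_eq_pow:
  assumes "w \<in> generate G {x, z}" and "y \<in> generate G {x, z}"
    and "inv y \<otimes> w \<otimes> y = w [^] (1 + r)" and kr: "(k::nat) * r = n"
  shows "w \<in> generate G {x [^] k, z}"
proof -
  obtain a b :: nat where wab: "w = x [^] a \<otimes> z [^] b" and "n dvd a * r"
    using assms(1-3) by (rule x_exponent_dvd_of_conj_eq_pow)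
  then have "k * r dvd a * r" using kr by simp
  moreover have "r \<noteq> 0" using kr n_pos by auto
  ultimately have "k dvd a" by simp
  then show ?thesis unfolding wab by (auto simp: normal_form_mem_generate)
qed

lemma conj_z_by_conjugates:
  assumes "g \<in> carrier G"
  shows "inv (g \<otimes> x \<otimes> inv g) \<otimes> (g \<otimes> z \<otimes> inv g) \<otimes> (g \<otimes> x \<otimes> inv g) = (g \<otimes> z \<otimes> inv g) [^] q"
proof -
  have "inv (g \<otimes> x \<otimes> inv g) \<otimes> (g \<otimes> z \<otimes> inv g) \<otimes> (g \<otimes> x \<otimes> inv g)
      = inv (inv g) \<otimes> (inv x \<otimes> z \<otimes> x) \<otimes> inv g"
    using assms by (simp add: inv_mult_group m_assoc)
  then show ?thesis using assms conj_z conj_nat_pow[of "inv g" z q] by simp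
qed

lemma normal_generate_x_pow:
  assumes normal: "generate G {x, z} \<lhd> G" and q: "q = 1 + r" and kr: "k * r = n"
  shows "generate G {x [^] k, z} \<lhd> G"
proof (rule normal_generate_of_conj_mem)
  have conj_mem: "g \<otimes> h \<otimes> inv g \<in> generate G {x, z}" if "g \<in> carrier G" "h \<in> {x, z}" for g h
    using normal that generate.incl[of _ "{x, z}" G] by (auto simp: normal_inv_iff)
  fix h g assume "h \<in> {x [^] k, z}" and g: "g \<in> carrier G"
  then consider "h = x [^] k" | "h = z" by blast
  then show "g \<otimes> h \<otimes> inv g \<in> generate G {x [^] k, z}"
  proof cases
    case 1
    then have "g \<otimes> h \<otimes> inv g = (g \<otimes> x \<otimes> inv g) [^] k" using g conj_nat_pow[of "inv g" x] by simp
    then show ?thesis using pow_mem_generate_x_pow conj_mem g by simp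
  next
    case 2
    have "inv (g \<otimes> x \<otimes> inv g) \<otimes> (g \<otimes> z \<otimes> inv g) \<otimes> (g \<otimes> x \<otimes> inv g) = (g \<otimes> z \<otimes> inv g) [^] (1 + r)"
      using conj_z_by_conjugates g q by blast
    with 2 show ?thesis using mem_generate_x_pow_of_conj_eq_pow conj_mem g kr by blast
  qed
qed simp

end

theorem lemma3p4:
  fixes G :: "('g, 'b) monoid_scheme" and R L x z :: 'g
    and phi :: "'g set \<Rightarrow> nat \<times> nat" and H :: "'g set" and p e f :: nat
  assumes "Factorial_Ring.prime p" and "odd p" and "1 \<le> e"
    and "orreg_map G R L"
    and "complete_multipartite_labelling G R L p (p ^ e) phi"
    and "H = part_stabiliser G R phi"
    and "x \<in> H" and "z \<in> H" and "generate G {x, z} = H"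
    and "x [^]\<^bsub>G\<^esub> (p ^ e) = \<one>\<^bsub>G\<^esub>"
    and "z [^]\<^bsub>G\<^esub> (p ^ e) = \<one>\<^bsub>G\<^esub>"
    and "inv\<^bsub>G\<^esub> x \<otimes>\<^bsub>G\<^esub> z \<otimes>\<^bsub>G\<^esub> x = z [^]\<^bsub>G\<^esub> (1 + p ^ f)"
    and "card H = p ^ (2 * e)"
    and "1 \<le> f" and "f \<le> e"
  shows "generate G {x [^]\<^bsub>G\<^esub> (p ^ (e - f)), z} \<lhd> G"
proof -
  interpret group G using \<open>orreg_map G R L\<close> unfolding orreg_map_def by blast
  have RL: "R \<in> carrier G" "L \<in> carrier G" using \<open>orreg_map G R L\<close> unfolding orreg_map_def by auto
  have xz: "x \<in> carrier G" "z \<in> carrier G"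
    using assms(6-8) unfolding part_stabiliser_def by auto
  interpret metacyclic_pair G x z "1 + p ^ f" "p ^ e"
    using assms xz prime_gt_0_nat[of p] by unfold_locales (auto simp: mult_2 power_add)
  have "generate G {x, z} \<lhd> G"
    using generate_is_subgroup[of "{x, z}"] xz assms(6,9)
      part_stabiliser_conj_closed[OF RL \<open>complete_multipartite_labelling G R L p (p ^ e) phi\<close>]
    by (auto intro: normal_invI)
  moreover have "p ^ (e - f) * p ^ f = p ^ e" using \<open>f \<le> e\<close> by (simp flip: power_add)
  ultimately show ?thesis by (intro normal_generate_x_pow) auto
qed

end
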